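(* Let $(X,d_X)$ and $(Y,d_Y)$ be separable metric spaces with $X$ zero-dimensional, and let $\xi$ be a nonzero countable ordinal. A function $f:X\to Y$ is of Baire class $\xi$ if and only if there is a sequence of functions $X\to Y$ converging uniformly to $f$ such that each of them is locally constant on some $\mathbf{\Pi}^0_\xi$-partition of $X$. The same equivalence holds with "locally constant" replaced by "locally Lipschitz", and also with "locally constant" replaced by "locally continuous".
   Context: Work in ZF plus countable choice over the reals. $f$ is of Baire class $1$ if $f^{-1}(U)\in\mathbf{\Sigma}^0_2(X)$ for every open $U\subseteq Y$; for $1<\xi<\omega_1$, $f$ is of Baire class $\xi$ if it is the pointwise limit of functions $f_n:X\to Y$ each of Baire class $\xi_n$ for some $1\le\xi_n<\xi$. A $\mathbf{\Pi}^0_\xi$-partition of $X$ is a family $\langle C_n:n<N\rangle$, $1\le N\le\omega$, of nonempty pairwise disjoint sets in $\mathbf{\Pi}^0_\xi(X)$ whose union is $X$. A function $g:X\to Y$ is locally constant (resp. Lipschitz, continuous) on such a partition if there are constant (resp. Lipschitz, continuous) functions $g_n:X\to Y$ with $g\restriction C_n=g_n\restriction C_n$ for all $n<N$. *)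

theory Defs
  imports "HOL-Analysis.Analysis" "HOL-Library.Extended_Nat"
begin

text \<open>Countable ordinals are represented by well-orders on subsets of nat
  (every countable ordinal is the order type of such a relation, and conversely).
  The ordinal is nonzero iff the field is nonempty; it is the finite ordinal k
  iff the field is finite of cardinality k.\<close>

definition separable_space :: "'a::topological_space itself \<Rightarrow> bool" where
  "separable_space _ \<longleftrightarrow> (\<exists>D::'a set. countable D \<and> closure D = UNIV)"

definition zero_dimensional :: "'a::topological_space itself \<Rightarrow> bool" where
  "zero_dimensional _ \<longleftrightarrow>
     (\<forall>(U::'a set) x. open U \<and> x \<in> U \<longrightarrow> (\<exists>V. open V \<and> closed V \<and> x \<in> V \<and> V \<subseteq> U))"

inductive Sigma0 :: "nat rel \<Rightarrow> 'a::topological_space set \<Rightarrow> bool" where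
  Sigma0_open: "Well_order r \<Longrightarrow> Field r \<noteq> {} \<Longrightarrow> open A \<Longrightarrow> Sigma0 r A"
| Sigma0_union: "Well_order r \<Longrightarrow>
     (\<forall>n::nat. \<exists>s::nat rel. (s, r) \<in> ordLess \<and> Field s \<noteq> {} \<and> Sigma0 s (- F n)) \<Longrightarrow>
     Sigma0 r (\<Union>n::nat. F n)"

definition Pi0 :: "nat rel \<Rightarrow> 'a::topological_space set \<Rightarrow> bool" where
  "Pi0 r A \<longleftrightarrow> Sigma0 r (- A)"

inductive baire_class :: "nat rel \<Rightarrow> ('a::topological_space \<Rightarrow> 'b::topological_space) \<Rightarrow> bool" where
  baire_one: "Well_order r \<Longrightarrow> finite (Field r) \<Longrightarrow> card (Field r) = 1 \<Longrightarrow>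
     (\<forall>U. open U \<longrightarrow>
        (\<exists>s::nat rel. Well_order s \<and> finite (Field s) \<and> card (Field s) = 2 \<and> Sigma0 s (f -` U))) \<Longrightarrow>
     baire_class r f"
| baire_lim: "Well_order r \<Longrightarrow>
     (\<forall>n::nat. \<exists>s::nat rel. (s, r) \<in> ordLess \<and> Field s \<noteq> {} \<and> baire_class s (g n)) \<Longrightarrow>
     (\<forall>x. (\<lambda>n. g n x) \<longlonglongrightarrow> f x) \<Longrightarrow>
     baire_class r f"

definition Pi0_partition :: "nat rel \<Rightarrow> (nat \<Rightarrow> 'a::topological_space set) \<Rightarrow> enat \<Rightarrow> bool" where
  "Pi0_partition r C N \<longleftrightarrow> 1 \<le> N
     \<and> (\<forall>n. enat n < N \<longrightarrow> C n \<noteq> {} \<and> Pi0 r (C n))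
     \<and> (\<forall>m n. enat m < N \<longrightarrow> enat n < N \<longrightarrow> m \<noteq> n \<longrightarrow> C m \<inter> C n = {})
     \<and> (\<Union>{C n |n. enat n < N}) = UNIV"

definition locally_on_partition ::
  "(('a \<Rightarrow> 'b) \<Rightarrow> bool) \<Rightarrow> (nat \<Rightarrow> 'a set) \<Rightarrow> enat \<Rightarrow> ('a \<Rightarrow> 'b) \<Rightarrow> bool" where
  "locally_on_partition P C N g \<longleftrightarrow>
     (\<exists>G. \<forall>n. enat n < N \<longrightarrow> P (G n) \<and> (\<forall>x\<in>C n. g x = G n x))"

definition constant_fun :: "('a \<Rightarrow> 'b) \<Rightarrow> bool" where
  "constant_fun h \<longleftrightarrow> (\<exists>c. h = (\<lambda>_. c))"

definition lipschitz_fun :: "('a::metric_space \<Rightarrow> 'b::metric_space) \<Rightarrow> bool" where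
  "lipschitz_fun h \<longleftrightarrow> (\<exists>L. L-lipschitz_on UNIV h)"

definition continuous_fun :: "('a::topological_space \<Rightarrow> 'b::topological_space) \<Rightarrow> bool" where
  "continuous_fun h \<longleftrightarrow> continuous_on UNIV h"

definition approx_by_local ::
  "nat rel \<Rightarrow> (('a::metric_space \<Rightarrow> 'b::metric_space) \<Rightarrow> bool) \<Rightarrow> ('a \<Rightarrow> 'b) \<Rightarrow> bool" where
  "approx_by_local r P f \<longleftrightarrow>
     (\<exists>h :: nat \<Rightarrow> 'a \<Rightarrow> 'b. uniform_limit UNIV h f sequentially \<and>
        (\<forall>n. \<exists>C N. Pi0_partition r C N \<and> locally_on_partition P C N (h n)))"

end

theory Submission
  imports Defs
begin

text \<open>A function is of Baire class \<open>\<xi>\<close> iff preimages of open sets are countable unions of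
  \<open>\<Pi>\<^sup>0\<^sub>\<xi>\<close> sets; the forward direction is an induction along the definition, the converse an
  induction on \<open>\<xi>\<close>. In a separable zero-dimensional space every \<open>\<Sigma>\<^sup>0\<^sub>\<xi>\<close> set is a disjoint
  union of \<open>\<Pi>\<^sup>0\<^sub>\<xi>\<close> sets, so countable \<open>\<Pi>\<^sup>0\<^sub>\<xi>\<close> covers refine to \<open>\<Pi>\<^sup>0\<^sub>\<xi>\<close> partitions. Covering
  by preimages of small balls around a dense sequence then makes such an \<open>f\<close> a uniform limit of
  functions that are constant on the pieces of \<open>\<Pi>\<^sup>0\<^sub>\<xi>\<close> partitions; conversely, functions
  continuous on such pieces are measurable in the same sense, which survives uniform limits.
  For the converse induction at \<open>\<xi> > 1\<close>, each piece of these partitions is a countable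
  intersection of sets of lower class: deciding membership from finitely many of them at stage
  \<open>n\<close> and keeping the finest mutually consistent approximation yields functions of lower
  class converging pointwise to \<open>f\<close>.\<close>

notation ordLess2 (infix \<open><o\<close> 50)
notation ordLeq3 (infix \<open>\<le>o\<close> 50)

section \<open>Countable ordinals\<close>

lemma ordLess_Well_order: "s <o r \<Longrightarrow> Well_order s \<and> Well_order r"
  unfolding ordLess_def by blast

lemma ordLeq_Well_order: "s \<le>o r \<Longrightarrow> Well_order s \<and> Well_order r"
  unfolding ordLeq_def by blast

lemma ordLeq_Field_nonempty: "s \<le>o r \<Longrightarrow> Field s \<noteq> {} \<Longrightarrow> Field r \<noteq> {}"
  unfolding ordLeq_def using embed_Field by fastforce

lemma ordLess_Field_nonempty: "s <o r \<Longrightarrow> Field s \<noteq> {} \<Longrightarrow> Field r \<noteq> {}"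
  using ordLeq_Field_nonempty ordLess_imp_ordLeq by blast

lemma ordLess_card_less:
  assumes "s <o r" "finite (Field r)"
  shows "finite (Field s) \<and> card (Field s) < card (Field r)"
proof -
  obtain f where e: "embed s r f" and nb: "\<not> bij_betw f (Field s) (Field r)" and w: "Well_order s"
    using assms(1) unfolding ordLess_def embedS_def by auto
  have inj: "inj_on f (Field s)" using embed_inj_on[OF w e] .
  have sub: "f ` Field s \<subset> Field r" using embed_Field[OF e] nb inj unfolding bij_betw_def by auto
  then have "finite (Field s)" using assms(2) inj finite_imageD finite_subset by blast
  moreover have "card (Field s) < card (Field r)"
    using psubset_card_mono[OF assms(2) sub] card_image[OF inj] by simp
  ultimately show ?thesis ..
qed

text \<open>The order type of \<open>r\<close> is \<open>0\<close> or \<open>1\<close>.\<close>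
definition ord_le_one :: "nat rel \<Rightarrow> bool" where
  "ord_le_one r \<longleftrightarrow> \<not> (\<exists>s::nat rel. s <o r \<and> Field s \<noteq> {})"

lemma ord_le_one_iff_card:
  assumes w: "Well_order r" and ne: "Field r \<noteq> {}"
  shows "ord_le_one r \<longleftrightarrow> finite (Field r) \<and> card (Field r) = 1"
proof
  assume one: "ord_le_one r"
  show "finite (Field r) \<and> card (Field r) = 1"
  proof (rule ccontr)
    assume not_one: "\<not> ?thesis"
    have "\<exists>a b. a \<in> Field r \<and> b \<in> Field r \<and> a \<noteq> b"
    proof (rule ccontr)
      assume "\<not> ?thesis"
      then obtain a where "Field r = {a}" using ne by blast
      with not_one show False by simp
    qed
    then obtain c d where cd: "c \<noteq> d" "(c, d) \<in> r"
      using w unfolding well_order_on_def linear_order_on_def total_on_def by metis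
    have "Refl r"
      using w unfolding well_order_on_def linear_order_on_def partial_order_on_def preorder_on_def
      by blast
    then have "Field (Restr r (underS r d)) = underS r d"
      by (intro Refl_Field_Restr2) (auto simp: underS_def Field_def)
    moreover have "c \<in> underS r d" using cd by (auto simp: underS_def)
    ultimately show False
      using one underS_Restr_ordLess[OF w ne] unfolding ord_le_one_def by blast
  qed
next
  assume one: "finite (Field r) \<and> card (Field r) = 1"
  show "ord_le_one r"
    unfolding ord_le_one_def
  proof
    assume "\<exists>s::nat rel. s <o r \<and> Field s \<noteq> {}"
    then obtain s :: "nat rel" where "s <o r" "Field s \<noteq> {}" by blast
    with ordLess_card_less[OF this(1)] one show False by auto
  qed
qed

lemma ordLess_upper_bound:
  fixes s t :: "'a rel"
  assumes "s <o r" "t <o r" "Field s \<noteq> {}" "Field t \<noteq> {}"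
  shows "\<exists>u::'a rel. u <o r \<and> Field u \<noteq> {} \<and> s \<le>o u \<and> t \<le>o u"
proof -
  have wo: "Well_order s" "Well_order t" using assms(1,2) ordLess_Well_order by auto
  consider "s \<le>o t" | "t \<le>o s" using ordLeq_total[OF wo] by blast
  then show ?thesis
    using assms ordLeq_reflexive[OF wo(1)] ordLeq_reflexive[OF wo(2)] by cases blast+
qed

lemma ordLess_finite_upper_bound:
  fixes S :: "'i \<Rightarrow> nat rel"
  assumes "finite I" "I \<noteq> {}" "\<forall>i\<in>I. S i <o r \<and> Field (S i) \<noteq> {}"
  shows "\<exists>t::nat rel. t <o r \<and> Field t \<noteq> {} \<and> (\<forall>i\<in>I. S i \<le>o t)"
  using assms
proof (induction I rule: finite_ne_induct)
  case (singleton x)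
  then show ?case using ordLeq_reflexive ordLess_Well_order by blast
next
  case (insert x F)
  then have "\<forall>i\<in>F. S i <o r \<and> Field (S i) \<noteq> {}" by simp
  then obtain t :: "nat rel" where t: "t <o r" "Field t \<noteq> {}" "\<forall>i\<in>F. S i \<le>o t"
    using insert.IH by blast
  have "S x <o r" "Field (S x) \<noteq> {}" using insert.prems by simp_all
  then obtain u :: "nat rel" where u: "u <o r" "Field u \<noteq> {}" "t \<le>o u" "S x \<le>o u"
    using ordLess_upper_bound[OF t(1) _ t(2)] by blast
  have "\<forall>i\<in>insert x F. S i \<le>o u"
    using u(4) t(3) ordLeq_transitive[OF _ u(3)] by blast
  with u(1,2) show ?case by blast
qed

section \<open>Additive and multiplicative Borel classes\<close>

lemma Sigma0_Well_order: "Sigma0 r A \<Longrightarrow> Well_order r \<and> Field r \<noteq> {}"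
proof (induction rule: Sigma0.cases)
  case (Sigma0_union r F)
  then obtain s :: "nat rel" where "s <o r" "Field s \<noteq> {}" by blast
  with Sigma0_union show ?case using ordLess_Field_nonempty by blast
qed simp

lemma Pi0_Well_order: "Pi0 r A \<Longrightarrow> Well_order r \<and> Field r \<noteq> {}"
  unfolding Pi0_def by (rule Sigma0_Well_order)

lemma Pi0_closed: "Well_order r \<Longrightarrow> Field r \<noteq> {} \<Longrightarrow> closed A \<Longrightarrow> Pi0 r A"
  unfolding Pi0_def by (rule Sigma0.Sigma0_open) auto

lemma open_if_Sigma0_ord_le_one:
  assumes "ord_le_one r" "Sigma0 r A"
  shows "open A"
  using assms(2)
proof (cases rule: Sigma0.cases)
  case (Sigma0_union F)
  then show ?thesis using assms(1) unfolding ord_le_one_def by blast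
qed

lemma closed_if_Pi0_ord_le_one: "ord_le_one r \<Longrightarrow> Pi0 r A \<Longrightarrow> closed A"
  unfolding Pi0_def closed_def using open_if_Sigma0_ord_le_one .

lemma open_eq_UN_closed:
  fixes U :: "'a::metric_space set"
  assumes "open U"
  obtains F :: "nat \<Rightarrow> 'a set" where "\<And>n. closed (F n)" "U = (\<Union>n. F n)"
proof -
  have "fsigma_in euclidean U"
    using open_imp_fsigma_in[OF metrizable_space_euclidean] assms by simp
  then obtain C :: "nat \<Rightarrow> 'a set" where "\<And>n. closed (C n)" "U = (\<Union>n. C n)"
    unfolding fsigma_in_ascending by auto
  then show thesis by (rule that)
qed

lemma Sigma0_UN_Pi0_below:
  assumes "Well_order r" "\<forall>n::nat. S n <o r \<and> Field (S n) \<noteq> {} \<and> Pi0 (S n) (F n)"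
  shows "Sigma0 r (\<Union>n. F n)"
  using assms unfolding Pi0_def by (blast intro: Sigma0.Sigma0_union)

lemma Sigma0_UN_Pi0_belowE:
  fixes A :: "'a::metric_space set"
  assumes "Sigma0 r A" and "\<not> ord_le_one r"
  obtains F :: "nat \<Rightarrow> 'a set" and S :: "nat \<Rightarrow> nat rel"
  where "A = (\<Union>n. F n)" "\<And>n. S n <o r" "\<And>n. Field (S n) \<noteq> {}" "\<And>n. Pi0 (S n) (F n)"
  using assms(1)
proof (cases rule: Sigma0.cases)
  case Sigma0_open
  obtain s :: "nat rel" where s: "s <o r" "Field s \<noteq> {}"
    using assms(2) unfolding ord_le_one_def by blast
  obtain K :: "nat \<Rightarrow> 'a set" where K: "\<And>k. closed (K k)" "A = (\<Union>k. K k)"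
    using open_eq_UN_closed[OF Sigma0_open(3)] by blast
  have "Pi0 s (K k)" for k using Pi0_closed[OF _ s(2) K(1)] ordLess_Well_order[OF s(1)] by blast
  with s K(2) show thesis by (intro that[of K "\<lambda>_. s"])
next
  case (Sigma0_union F)
  then obtain S :: "nat \<Rightarrow> nat rel" where "\<forall>n. S n <o r \<and> Field (S n) \<noteq> {} \<and> Sigma0 (S n) (- F n)"
    by metis
  with Sigma0_union(1) show thesis by (intro that[of F S]) (auto simp: Pi0_def)
qed

lemma Sigma0_mono:
  assumes "Sigma0 s A" "s \<le>o t"
  shows "Sigma0 t A"
  using assms(1)
proof (cases rule: Sigma0.cases)
  case Sigma0_open
  then show ?thesis
    using ordLeq_Field_nonempty[OF assms(2)] ordLeq_Well_order[OF assms(2)]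
    by (simp add: Sigma0.Sigma0_open)
next
  case (Sigma0_union F)
  then have "\<forall>n. \<exists>s'. s' <o t \<and> Field s' \<noteq> {} \<and> Sigma0 s' (- F n)"
    using ordLess_ordLeq_trans[OF _ assms(2)] by blast
  then show ?thesis
    unfolding Sigma0_union(1)
    by (intro Sigma0.Sigma0_union conjunct2[OF ordLeq_Well_order[OF assms(2)]])
qed

lemma Pi0_mono: "Pi0 s A \<Longrightarrow> s \<le>o t \<Longrightarrow> Pi0 t A"
  unfolding Pi0_def by (rule Sigma0_mono)

lemma Pi0_if_Sigma0_below: "Sigma0 s A \<Longrightarrow> s <o t \<Longrightarrow> Pi0 t A"
  using Sigma0_UN_Pi0_below[of t "\<lambda>_. s" "\<lambda>_. - A"] Sigma0_Well_order ordLess_Well_order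
  unfolding Pi0_def by auto

lemma UN_prod_decode: "(\<Union>m. G (prod_decode m)) = (\<Union>p. G p)"
  by (metis image_image surj_def prod_encode_inverse)

lemma Sigma0_UN:
  fixes A :: "nat \<Rightarrow> 'a::metric_space set"
  assumes w: "Well_order r" "Field r \<noteq> {}" and A: "\<And>n. Sigma0 r (A n)"
  shows "Sigma0 r (\<Union>n. A n)"
proof (cases "ord_le_one r")
  case True
  then show ?thesis
    using w A open_if_Sigma0_ord_le_one by (intro Sigma0.Sigma0_open open_UN) auto
next
  case False
  have "\<forall>n. \<exists>F (S::nat \<Rightarrow> nat rel). A n = (\<Union>k. F k) \<and>
      (\<forall>k. S k <o r \<and> Field (S k) \<noteq> {} \<and> Pi0 (S k) (F k))"
    by (metis A False Sigma0_UN_Pi0_belowE)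
  then obtain F where "\<forall>n. \<exists>S::nat \<Rightarrow> nat rel. A n = (\<Union>k. F n k) \<and>
      (\<forall>k. S k <o r \<and> Field (S k) \<noteq> {} \<and> Pi0 (S k) (F n k))"
    by metis
  then obtain S :: "nat \<Rightarrow> nat \<Rightarrow> nat rel" where "\<forall>n. A n = (\<Union>k. F n k) \<and>
      (\<forall>k. S n k <o r \<and> Field (S n k) \<noteq> {} \<and> Pi0 (S n k) (F n k))"
    by metis
  then have F: "\<And>n. A n = (\<Union>k. F n k)"
    and S: "\<And>n k. S n k <o r \<and> Field (S n k) \<noteq> {} \<and> Pi0 (S n k) (F n k)"
    by auto
  have "(\<Union>n. A n) = (\<Union>m. case_prod F (prod_decode m))"
    unfolding UN_prod_decode F by auto
  also have "Sigma0 r \<dots>"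
    using S by (intro Sigma0_UN_Pi0_below[OF w(1), where S = "\<lambda>m. case_prod S (prod_decode m)"])
      (simp split: prod.split)
  finally show ?thesis .
qed

lemma Sigma0_Un:
  fixes A B :: "'a::metric_space set"
  assumes "Sigma0 r A" "Sigma0 r B"
  shows "Sigma0 r (A \<union> B)"
proof -
  have "A \<union> B = (\<Union>n::nat. if n = 0 then A else B)" by auto
  also have "Sigma0 r \<dots>"
    using assms Sigma0_Well_order by (intro Sigma0_UN) auto
  finally show ?thesis .
qed

lemma Pi0_INT:
  fixes A :: "nat \<Rightarrow> 'a::metric_space set"
  assumes "Well_order r" "Field r \<noteq> {}" "\<And>n. Pi0 r (A n)"
  shows "Pi0 r (\<Inter>n. A n)"
  using Sigma0_UN[of r "\<lambda>n. - A n"] assms unfolding Pi0_def by (simp add: uminus_INF)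

lemma Pi0_Int:
  fixes A B :: "'a::metric_space set"
  assumes "Pi0 r A" "Pi0 r B"
  shows "Pi0 r (A \<inter> B)"
  using Sigma0_Un[of r "- A" "- B"] assms unfolding Pi0_def by simp

lemma Sigma0_Int:
  fixes A B :: "'a::metric_space set"
  assumes A: "Sigma0 r A" and B: "Sigma0 r B"
  shows "Sigma0 r (A \<inter> B)"
proof (cases "ord_le_one r")
  case True
  then show ?thesis
    using A B Sigma0_Well_order open_if_Sigma0_ord_le_one
    by (intro Sigma0.Sigma0_open open_Int) auto
next
  case False
  have w: "Well_order r" using A Sigma0_Well_order by blast
  obtain F S where A_eq: "A = (\<Union>n. F n)"
    and F: "\<And>n::nat. S n <o r \<and> Field (S n) \<noteq> {} \<and> Pi0 (S n) (F n)"
    using Sigma0_UN_Pi0_belowE[OF A False] by metis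
  obtain G T where B_eq: "B = (\<Union>n. G n)"
    and G: "\<And>n::nat. T n <o r \<and> Field (T n) \<noteq> {} \<and> Pi0 (T n) (G n)"
    using Sigma0_UN_Pi0_belowE[OF B False] by metis
  have "\<exists>t::nat rel. t <o r \<and> Field t \<noteq> {} \<and> S a \<le>o t \<and> T b \<le>o t" for a b
    using ordLess_upper_bound[of "S a" r "T b"] F[of a] G[of b] by blast
  then obtain M :: "nat \<Rightarrow> nat \<Rightarrow> nat rel"
    where M: "\<And>a b. M a b <o r \<and> Field (M a b) \<noteq> {} \<and> S a \<le>o M a b \<and> T b \<le>o M a b"
    by metis
  have "Pi0 (M a b) (F a \<inter> G b)" for a b
    using F G M by (blast intro: Pi0_Int Pi0_mono)
  then have "Sigma0 r (\<Union>m. case_prod (\<lambda>a b. F a \<inter> G b) (prod_decode m))"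
    using M by (intro Sigma0_UN_Pi0_below[OF w, where S = "\<lambda>m. case_prod M (prod_decode m)"])
      (simp split: prod.split)
  also have "(\<Union>m. case_prod (\<lambda>a b. F a \<inter> G b) (prod_decode m)) = A \<inter> B"
    unfolding UN_prod_decode A_eq B_eq by auto
  finally show ?thesis .
qed

lemma Sigma0_INT_finite:
  fixes A :: "'i \<Rightarrow> 'a::metric_space set"
  assumes "finite I" "Well_order r" "Field r \<noteq> {}" "\<forall>i\<in>I. Sigma0 r (A i)"
  shows "Sigma0 r (\<Inter>i\<in>I. A i)"
  using assms by (induction I rule: finite_induct) (auto intro: Sigma0.Sigma0_open Sigma0_Int)

lemma Pi0_INT_finite:
  fixes A :: "'i \<Rightarrow> 'a::metric_space set"
  assumes "finite I" "Well_order r" "Field r \<noteq> {}" "\<forall>i\<in>I. Pi0 r (A i)"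
  shows "Pi0 r (\<Inter>i\<in>I. A i)"
  using assms by (induction I rule: finite_induct) (auto intro: Pi0_closed Pi0_Int)

section \<open>Countable unions of multiplicative classes\<close>

text \<open>\<open>Sigma0_succ r\<close> is the class \<open>\<Sigma>\<^sup>0\<^sub>\<xi>\<^sub>+\<^sub>1\<close> for \<open>\<xi>\<close> the order type of \<open>r\<close>.\<close>
definition Sigma0_succ :: "nat rel \<Rightarrow> 'a::topological_space set \<Rightarrow> bool" where
  "Sigma0_succ r A \<longleftrightarrow> (\<exists>F::nat \<Rightarrow> 'a set. A = (\<Union>n. F n) \<and> (\<forall>n. Pi0 r (F n)))"

definition Sigma0_succ_measurable ::
  "nat rel \<Rightarrow> ('a::topological_space \<Rightarrow> 'b::topological_space) \<Rightarrow> bool" where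
  "Sigma0_succ_measurable r f \<longleftrightarrow> (\<forall>U. open U \<longrightarrow> Sigma0_succ r (f -` U))"

lemma Sigma0_succ_Pi0: "Pi0 r A \<Longrightarrow> Sigma0_succ r A"
  unfolding Sigma0_succ_def by (intro exI[of _ "\<lambda>_. A"]) simp

lemma Sigma0_succ_UN:
  fixes A :: "nat \<Rightarrow> 'a::topological_space set"
  assumes "\<And>n. Sigma0_succ r (A n)"
  shows "Sigma0_succ r (\<Union>n. A n)"
proof -
  obtain F :: "nat \<Rightarrow> nat \<Rightarrow> 'a set" where F: "\<And>n. A n = (\<Union>k. F n k)" "\<And>n k. Pi0 r (F n k)"
    using assms unfolding Sigma0_succ_def by metis
  have "(\<Union>n. A n) = (\<Union>m. case_prod F (prod_decode m))"
    unfolding UN_prod_decode F by auto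
  then show ?thesis
    unfolding Sigma0_succ_def using F(2) by (intro exI[of _ "\<lambda>m. case_prod F (prod_decode m)"])
      (simp split: prod.split)
qed

lemma Sigma0_succ_Int_Pi0:
  fixes A B :: "'a::metric_space set"
  assumes "Sigma0_succ r A" "Pi0 r B"
  shows "Sigma0_succ r (A \<inter> B)"
proof -
  obtain F :: "nat \<Rightarrow> 'a set" where "A = (\<Union>n. F n)" "\<And>n. Pi0 r (F n)"
    using assms(1) unfolding Sigma0_succ_def by blast
  then show ?thesis
    unfolding Sigma0_succ_def using assms(2)
    by (intro exI[of _ "\<lambda>n. F n \<inter> B"]) (auto intro: Pi0_Int)
qed

lemma open_Sigma0_succ:
  fixes U :: "'a::metric_space set"
  assumes "Well_order r" "Field r \<noteq> {}" "open U"
  shows "Sigma0_succ r U"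
proof -
  obtain F :: "nat \<Rightarrow> 'a set" where "\<And>n. closed (F n)" "U = (\<Union>n. F n)"
    using open_eq_UN_closed[OF assms(3)] by blast
  then show ?thesis
    unfolding Sigma0_succ_def using Pi0_closed[OF assms(1,2)] by blast
qed

lemma Sigma0_succ_ord_le_one_iff_fsigma:
  assumes "Well_order r" "Field r \<noteq> {}" "ord_le_one r"
  shows "Sigma0_succ r A \<longleftrightarrow> fsigma A"
proof -
  have "Pi0 r B \<longleftrightarrow> closed B" for B :: "'a set"
    using Pi0_closed[OF assms(1,2)] closed_if_Pi0_ord_le_one[OF assms(3)] by blast
  then show ?thesis unfolding Sigma0_succ_def fsigma.simps by auto
qed

lemma ord_le_one_if_ordLess_card_two:
  assumes "t <o s" "Field t \<noteq> {}" "finite (Field s)" "card (Field s) = 2"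
  shows "ord_le_one t"
proof -
  have fin: "finite (Field t)" and "card (Field t) < 2"
    using ordLess_card_less[OF assms(1,3)] assms(4) by auto
  moreover have "card (Field t) \<noteq> 0" using fin assms(2) by simp
  ultimately have "finite (Field t) \<and> card (Field t) = 1" by linarith
  then show ?thesis
    using ord_le_one_iff_card[OF conjunct1[OF ordLess_Well_order[OF assms(1)]] assms(2)] by blast
qed

lemma Sigma0_card_two_iff_fsigma:
  fixes A :: "'a::metric_space set"
  assumes w: "Well_order s" and two: "finite (Field s)" "card (Field s) = 2"
  shows "Sigma0 s A \<longleftrightarrow> fsigma A"
proof
  assume "Sigma0 s A"
  then show "fsigma A"
  proof (cases rule: Sigma0.cases)
    case Sigma0_open
    then show ?thesis using open_eq_UN_closed by (metis fsigma.intros)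
  next
    case (Sigma0_union F)
    have "closed (F n)" for n
    proof -
      obtain t :: "nat rel" where t: "t <o s" "Field t \<noteq> {}" "Sigma0 t (- F n)"
        using Sigma0_union(3) by blast
      then have "ord_le_one t" using ord_le_one_if_ordLess_card_two two by blast
      then show ?thesis using open_if_Sigma0_ord_le_one t(3) by (simp add: closed_def)
    qed
    then show ?thesis using Sigma0_union(1) by (simp add: fsigma.intros)
  qed
next
  assume "fsigma A"
  then obtain F :: "nat \<Rightarrow> 'a set" where F: "\<And>n. closed (F n)" "A = (\<Union>n. F n)"
    by (metis fsigma.cases)
  have "Field s \<noteq> {}" using two by auto
  then have "\<not> ord_le_one s" using ord_le_one_iff_card[OF w] two by simp
  then obtain t :: "nat rel" where t: "t <o s" "Field t \<noteq> {}" unfolding ord_le_one_def by blast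
  then have "Pi0 t (F n)" for n using Pi0_closed F(1) ordLess_Well_order by blast
  then show "Sigma0 s A"
    unfolding F(2) using t by (intro Sigma0_UN_Pi0_below[OF w, where S = "\<lambda>_. t"]) simp
qed

section \<open>Partitions of a zero-dimensional space\<close>

text \<open>Unlike in \<open>Pi0_partition\<close>, the pieces may be empty and are indexed by all of \<open>nat\<close>.\<close>
definition Pi0_seq_partition :: "nat rel \<Rightarrow> (nat \<Rightarrow> 'a::topological_space set) \<Rightarrow> bool" where
  "Pi0_seq_partition r Q \<longleftrightarrow> disjoint_family Q \<and> (\<forall>n. Pi0 r (Q n)) \<and> (\<Union>n. Q n) = UNIV"

lemma countable_clopen_cover:
  fixes U :: "'a::metric_space set"
  assumes sep: "separable_space TYPE('a)" and zd: "zero_dimensional TYPE('a)" and U: "open U"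
  shows "\<exists>\<C>. countable \<C> \<and> (\<forall>C\<in>\<C>. open C \<and> closed C) \<and> \<Union>\<C> = U"
proof -
  obtain D :: "'a set" where D: "countable D" "closure D = UNIV"
    using sep unfolding separable_space_def by blast
  define B where
    "B = {(d, e). d \<in> D \<and> e \<in> \<rat> \<and> (\<exists>V. open V \<and> closed V \<and> ball d e \<subseteq> V \<and> V \<subseteq> U)}"
  define V where "V p = (SOME V. open V \<and> closed V \<and> ball (fst p) (snd p) \<subseteq> V \<and> V \<subseteq> U)" for p
  have V: "open (V p) \<and> closed (V p) \<and> ball (fst p) (snd p) \<subseteq> V p \<and> V p \<subseteq> U" if "p \<in> B" for p
    using that unfolding B_def V_def by (cases p) (simp, rule someI_ex, blast)
  have "countable B"
    by (rule countable_subset[of _ "D \<times> \<rat>"]) (use D(1) countable_rat in \<open>auto simp: B_def\<close>)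
  have "U \<subseteq> (\<Union>p\<in>B. V p)"
  proof
    fix x assume "x \<in> U"
    then obtain V0 where V0: "open V0" "closed V0" "x \<in> V0" "V0 \<subseteq> U"
      using zd U unfolding zero_dimensional_def by blast
    obtain \<epsilon> where \<epsilon>: "\<epsilon> > 0" "ball x \<epsilon> \<subseteq> V0" using V0(1,3) open_contains_ball by blast
    have "x \<in> closure D" "\<epsilon> / 3 > 0" using D(2) \<epsilon>(1) by auto
    then obtain d where d: "d \<in> D" "dist d x < \<epsilon> / 3"
      using closure_approachable by blast
    obtain e where e: "e \<in> \<rat>" "\<epsilon> / 3 < e" "e < 2 * \<epsilon> / 3"
      using Rats_dense_in_real[of "\<epsilon> / 3" "2 * \<epsilon> / 3"] \<epsilon>(1) by auto
    have "ball d e \<subseteq> ball x \<epsilon>"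
    proof
      fix y assume "y \<in> ball d e"
      then show "y \<in> ball x \<epsilon>"
        using dist_triangle[of x y d] d(2) e(3) by (simp add: dist_commute)
    qed
    then have "(d, e) \<in> B" unfolding B_def using d(1) e(1) \<epsilon>(2) V0 by blast
    moreover have "x \<in> ball d e" using d(2) e by (simp add: dist_commute)
    ultimately show "x \<in> (\<Union>p\<in>B. V p)" using V[of "(d, e)"] by auto
  qed
  then have "U = \<Union>(V ` B)" using V by blast
  then show ?thesis using V \<open>countable B\<close> by (intro exI[of _ "V ` B"]) auto
qed

lemma countable_Union_eq_UN_nat:
  assumes "countable \<C>"
  obtains W :: "nat \<Rightarrow> 'a set" where "\<And>n. W n \<in> insert {} \<C>" "\<Union>\<C> = (\<Union>n. W n)"
proof (cases "\<C> = {}")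
  case True
  then show ?thesis by (intro that[of "\<lambda>_. {}"]) auto
next
  case False
  then show ?thesis
    using from_nat_into[OF False] range_from_nat_into[OF False assms]
    by (intro that[of "from_nat_into \<C>"]) auto
qed

lemma open_eq_UN_clopen:
  fixes U :: "'a::metric_space set"
  assumes "separable_space TYPE('a)" "zero_dimensional TYPE('a)" "open U"
  obtains W :: "nat \<Rightarrow> 'a set" where "\<And>n. open (W n)" "\<And>n. closed (W n)" "U = (\<Union>n. W n)"
proof -
  obtain \<C> where \<C>: "countable \<C>" "\<forall>C\<in>\<C>. open C \<and> closed C" "\<Union>\<C> = U"
    using countable_clopen_cover[OF assms] by blast
  obtain W :: "nat \<Rightarrow> 'a set" where W: "\<And>n. W n \<in> insert {} \<C>" "\<Union>\<C> = (\<Union>n. W n)"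
    using countable_Union_eq_UN_nat[OF \<C>(1)] by blast
  have "open (W n) \<and> closed (W n)" for n using W(1)[of n] \<C>(2) by auto
  with W(2) \<C>(3) show thesis by (intro that[of W]) auto
qed

lemma open_eq_UN_disjoint_clopen:
  fixes U :: "'a::metric_space set"
  assumes "separable_space TYPE('a)" "zero_dimensional TYPE('a)" "open U"
  obtains V :: "nat \<Rightarrow> 'a set"
  where "disjoint_family V" "\<And>n. open (V n)" "\<And>n. closed (V n)" "U = (\<Union>n. V n)"
proof -
  obtain W :: "nat \<Rightarrow> 'a set" where W: "\<And>n. open (W n)" "\<And>n. closed (W n)" "U = (\<Union>n. W n)"
    using open_eq_UN_clopen[OF assms] by blast
  have "open (disjointed W n)" "closed (disjointed W n)" for n
    unfolding disjointed_def using W by (auto intro!: open_UN closed_UN)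
  then show thesis
    using W(3) by (intro that[of "disjointed W"])
      (simp_all add: disjoint_family_disjointed UN_disjointed_eq)
qed

lemma Sigma0_eq_UN_disjoint_Pi0:
  fixes A :: "'a::metric_space set"
  assumes sep: "separable_space TYPE('a)" and zd: "zero_dimensional TYPE('a)" and A: "Sigma0 r A"
  obtains W :: "nat \<Rightarrow> 'a set" where "disjoint_family W" "\<And>n. Pi0 r (W n)" "A = (\<Union>n. W n)"
proof -
  have w: "Well_order r" "Field r \<noteq> {}" using Sigma0_Well_order[OF A] by auto
  show thesis
  proof (cases "ord_le_one r")
    case True
    then have "open A" using A open_if_Sigma0_ord_le_one by blast
    then show ?thesis
      using open_eq_UN_disjoint_clopen[OF sep zd] Pi0_closed[OF w] that by metis
  next
    case False
    obtain F :: "nat \<Rightarrow> 'a set" and S :: "nat \<Rightarrow> nat rel" where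
      F: "A = (\<Union>n. F n)" and S: "\<And>n. S n <o r" "\<And>n. Field (S n) \<noteq> {}" "\<And>n. Pi0 (S n) (F n)"
      using Sigma0_UN_Pi0_belowE[OF A False] by blast
    have "Pi0 r (F n)" for n using Pi0_mono[OF S(3) ordLess_imp_ordLeq[OF S(1)]] .
    moreover have "Pi0 r (- F i)" for i
      using Pi0_if_Sigma0_below[OF S(3)[unfolded Pi0_def] S(1)] .
    then have "Pi0 r (\<Inter>i\<in>{0..<n}. - F i)" for n by (intro Pi0_INT_finite[OF _ w]) auto
    ultimately have "Pi0 r (disjointed F n)" for n
      unfolding disjointed_def by (simp add: Diff_eq Pi0_Int uminus_SUP)
    then show thesis
      using F by (intro that[of "disjointed F"])
        (simp_all add: disjoint_family_disjointed UN_disjointed_eq)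
  qed
qed

lemma disjoint_family_prod_decode:
  "disjoint_family (R :: nat \<times> nat \<Rightarrow> 'a set) \<Longrightarrow> disjoint_family (\<lambda>k. R (prod_decode k))"
  unfolding disjoint_family_on_def by (metis UNIV_I prod_decode_inverse)

lemma disjoint_family_Int_pairs:
  fixes A :: "'i \<Rightarrow> 'a set" and V :: "'i \<Rightarrow> 'j \<Rightarrow> 'a set"
  assumes "disjoint_family A" "\<And>m. disjoint_family (V m)"
  shows "disjoint_family (\<lambda>p. A (fst p) \<inter> V (fst p) (snd p))"
  unfolding disjoint_family_on_def
proof (intro ballI impI)
  fix p q :: "'i \<times> 'j" assume "p \<noteq> q"
  then consider "fst p \<noteq> fst q" | "fst p = fst q" "snd p \<noteq> snd q" by (metis prod_eqI)
  then show "A (fst p) \<inter> V (fst p) (snd p) \<inter> (A (fst q) \<inter> V (fst q) (snd q)) = {}"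
    using assms unfolding disjoint_family_on_def by cases (auto, metis disjoint_iff)
qed

lemma Pi0_cover_refinement:
  fixes E :: "'i::countable \<Rightarrow> 'a::metric_space set"
  assumes sep: "separable_space TYPE('a)" and zd: "zero_dimensional TYPE('a)"
    and E: "\<And>i. Pi0 r (E i)" and cover: "(\<Union>i. E i) = UNIV"
  shows "\<exists>Q. Pi0_seq_partition r Q \<and> (\<forall>n. \<exists>i. Q n \<subseteq> E i)"
proof -
  define E' where "E' m = E (from_nat m)" for m
  have w: "Well_order r" "Field r \<noteq> {}" using Pi0_Well_order[OF E] by auto
  have "x \<in> (\<Union>m. E' m)" for x
    using cover unfolding E'_def by (metis UNIV_I UN_iff from_nat_to_nat)
  then have cover': "(\<Union>m. disjointed E' m) = UNIV" by (auto simp: UN_disjointed_eq)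
  have "Sigma0 r (- E' i)" for i using E unfolding E'_def Pi0_def .
  then have "Sigma0 r (\<Inter>i\<in>{0..<m}. - E' i)" for m
    by (intro Sigma0_INT_finite[of "{0..<m}" r "\<lambda>i. - E' i"] w) simp_all
  then have "\<exists>V::nat \<Rightarrow> 'a set. disjoint_family V \<and> (\<forall>n. Pi0 r (V n)) \<and>
      (\<Inter>i\<in>{0..<m}. - E' i) = (\<Union>n. V n)" for m
    by (rule Sigma0_eq_UN_disjoint_Pi0[OF sep zd]) blast
  then obtain V :: "nat \<Rightarrow> nat \<Rightarrow> 'a set" where V: "\<And>m. disjoint_family (V m)"
    "\<And>m n. Pi0 r (V m n)" "\<And>m. (\<Inter>i\<in>{0..<m}. - E' i) = (\<Union>n. V m n)"
    by metis
  define R where "R p = disjointed E' (fst p) \<inter> V (fst p) (snd p)" for p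
  have R_eq: "R p = E' (fst p) \<inter> V (fst p) (snd p)" for p
    using V(3)[of "fst p"] unfolding R_def disjointed_def by blast
  have "Pi0_seq_partition r (\<lambda>k. R (prod_decode k))"
    unfolding Pi0_seq_partition_def UN_prod_decode[of R]
  proof (intro conjI allI disjoint_family_prod_decode)
    show "disjoint_family R"
      unfolding R_def by (rule disjoint_family_Int_pairs[OF disjoint_family_disjointed V(1)])
    show "Pi0 r (R (prod_decode k))" for k
      unfolding R_eq using E V(2) unfolding E'_def by (simp add: Pi0_Int)
    have "x \<in> (\<Union>p. R p)" for x
    proof -
      obtain m where m: "x \<in> disjointed E' m" using cover' by blast
      then obtain n where "x \<in> V m n" using V(3)[of m] unfolding disjointed_def by blast
      with m show ?thesis unfolding R_def by (intro UN_I[of "(m, n)"]) auto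
    qed
    then show "(\<Union>p. R p) = UNIV" by blast
  qed
  moreover have "R (prod_decode k) \<subseteq> E (from_nat (fst (prod_decode k)))" for k
    unfolding R_eq E'_def by blast
  ultimately show ?thesis by blast
qed

lemma Pi0_seq_partition_refine:
  fixes W :: "nat \<Rightarrow> 'a::metric_space set"
  assumes sep: "separable_space TYPE('a)" and zd: "zero_dimensional TYPE('a)"
    and Q: "Pi0_seq_partition t Q" and W: "\<And>n. Pi0 t (W n)" "(\<Union>n. W n) = UNIV"
  shows "\<exists>Q'. Pi0_seq_partition t Q' \<and> (\<forall>l. \<exists>k n. Q' l \<subseteq> Q k \<inter> W n)"
proof -
  define E where "E p = Q (fst p) \<inter> W (snd p)" for p :: "nat \<times> nat"
  have "Pi0 t (E p)" for p
    using Q W(1) unfolding E_def Pi0_seq_partition_def by (simp add: Pi0_Int)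
  moreover have "x \<in> (\<Union>p. E p)" for x
  proof -
    obtain k where "x \<in> Q k" using Q unfolding Pi0_seq_partition_def by blast
    moreover obtain n where "x \<in> W n" using W(2) by blast
    ultimately show ?thesis unfolding E_def by (intro UN_I[of "(k, n)"]) auto
  qed
  then have "(\<Union>p. E p) = UNIV" by blast
  ultimately have "\<exists>Q'. Pi0_seq_partition t Q' \<and> (\<forall>l. \<exists>p. Q' l \<subseteq> E p)"
    by (rule Pi0_cover_refinement[OF sep zd])
  then show ?thesis unfolding E_def by blast
qed

lemma Sigma0_finite_refinement:
  fixes Z :: "'i \<Rightarrow> 'a::metric_space set"
  assumes sep: "separable_space TYPE('a)" and zd: "zero_dimensional TYPE('a)"
    and "finite I" and w: "Well_order t" "Field t \<noteq> {}" and "\<forall>i\<in>I. Sigma0 t (Z i)"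
  shows "\<exists>Q. Pi0_seq_partition t Q \<and> (\<forall>k. \<forall>i\<in>I. Q k \<subseteq> Z i \<or> Q k \<inter> Z i = {})"
  using \<open>finite I\<close> \<open>\<forall>i\<in>I. Sigma0 t (Z i)\<close>
proof (induction I rule: finite_induct)
  case empty
  show ?case
    using Pi0_cover_refinement[OF sep zd, of t "\<lambda>_::unit. UNIV"] Pi0_closed[OF w] by auto
next
  case (insert i0 I)
  then obtain Q where Q: "Pi0_seq_partition t Q" "\<forall>k. \<forall>i\<in>I. Q k \<subseteq> Z i \<or> Q k \<inter> Z i = {}"
    by auto
  obtain W :: "nat \<Rightarrow> 'a set" where W: "\<And>n. Pi0 t (W n)" "Z i0 = (\<Union>n. W n)"
    using Sigma0_eq_UN_disjoint_Pi0[OF sep zd] insert.prems by (metis insertI1)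
  define W' where "W' n = (case n of 0 \<Rightarrow> - Z i0 | Suc m \<Rightarrow> W m)" for n
  have "Pi0 t (- Z i0)" using insert.prems unfolding Pi0_def by simp
  then have W'_Pi0: "Pi0 t (W' n)" for n using W(1) unfolding W'_def by (simp split: nat.split)
  have "x \<in> (\<Union>n. W' n)" for x
  proof (cases "x \<in> Z i0")
    case True
    then obtain m where "x \<in> W m" using W(2) by blast
    then show ?thesis by (intro UN_I[of "Suc m"]) (simp_all add: W'_def)
  next
    case False
    then show ?thesis by (intro UN_I[of 0]) (simp_all add: W'_def)
  qed
  then have "(\<Union>n. W' n) = UNIV" by blast
  then have "\<exists>Q'. Pi0_seq_partition t Q' \<and> (\<forall>l. \<exists>k n. Q' l \<subseteq> Q k \<inter> W' n)"
    by (rule Pi0_seq_partition_refine[OF sep zd Q(1) W'_Pi0])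
  then obtain Q' where Q': "Pi0_seq_partition t Q'" "\<forall>l. \<exists>k n. Q' l \<subseteq> Q k \<inter> W' n"
    by blast
  have "Q' l \<subseteq> Z i \<or> Q' l \<inter> Z i = {}" if "i \<in> insert i0 I" for l i
  proof -
    obtain k n where kn: "Q' l \<subseteq> Q k \<inter> W' n" using Q'(2) by blast
    show ?thesis
    proof (cases "i = i0")
      case True
      then show ?thesis using kn W(2) unfolding W'_def by (cases n) auto
    next
      case False
      then show ?thesis using kn that Q(2) by blast
    qed
  qed
  then show ?case using Q'(1) by blast
qed

lemma ex_bij_betw_enat_less:
  fixes I :: "nat set"
  assumes "I \<noteq> {}"
  obtains e :: "nat \<Rightarrow> nat" and N :: enat where "1 \<le> N" "bij_betw e {k. enat k < N} I"
proof (cases "finite I")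
  case True
  obtain e where "bij_betw e {0..<card I} I" using ex_bij_betw_nat_finite[OF True] by blast
  moreover have "{k. enat k < enat (card I)} = {0..<card I}" by auto
  moreover have "1 \<le> enat (card I)"
    using True assms by (simp add: one_enat_def Suc_leI card_gt_0_iff)
  ultimately show thesis by (intro that[of "enat (card I)" e]) simp_all
next
  case False
  then show thesis using bij_enumerate[OF False] by (intro that[of \<infinity>]) simp_all
qed

lemma Pi0_partition_of_seq_partition:
  assumes Q: "Pi0_seq_partition r Q" and P: "\<And>n. P (G n)" and h: "\<And>n x. x \<in> Q n \<Longrightarrow> h x = G n x"
  shows "\<exists>C N. Pi0_partition r C N \<and> locally_on_partition P C N h"
proof -
  have disj: "disjoint_family Q" and Pi0: "\<And>n. Pi0 r (Q n)" and cover: "\<And>x. \<exists>n. x \<in> Q n"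
    using Q unfolding Pi0_seq_partition_def by auto
  have "{n. Q n \<noteq> {}} \<noteq> {}" using cover[of undefined] by auto
  then obtain e N where N: "1 \<le> N" and e: "bij_betw e {k. enat k < N} {n. Q n \<noteq> {}}"
    by (rule ex_bij_betw_enat_less)
  have "Pi0_partition r (\<lambda>k. Q (e k)) N"
    unfolding Pi0_partition_def
  proof (intro conjI allI impI N)
    fix k assume "enat k < N"
    then show "Q (e k) \<noteq> {}" "Pi0 r (Q (e k))" using e Pi0 unfolding bij_betw_def by auto
  next
    fix k l assume "enat k < N" "enat l < N" "k \<noteq> l"
    then have "e k \<noteq> e l" using e unfolding bij_betw_def inj_on_def by blast
    then show "Q (e k) \<inter> Q (e l) = {}" using disj unfolding disjoint_family_on_def by blast
  next
    have "x \<in> (\<Union>{Q (e k) |k. enat k < N})" for x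
    proof -
      obtain n where n: "x \<in> Q n" using cover by blast
      then have "n \<in> e ` {k. enat k < N}" using e unfolding bij_betw_def by auto
      with n show ?thesis by blast
    qed
    then show "\<Union>{Q (e k) |k. enat k < N} = UNIV" by blast
  qed
  moreover have "locally_on_partition P (\<lambda>k. Q (e k)) N h"
    unfolding locally_on_partition_def using P h by (intro exI[of _ "\<lambda>k. G (e k)"]) simp
  ultimately show ?thesis by blast
qed

section \<open>Measurability with respect to the successor class\<close>

lemma Sigma0_succ_measurable_Well_order:
  "Sigma0_succ_measurable r f \<Longrightarrow> Well_order r \<and> Field r \<noteq> {}"
  unfolding Sigma0_succ_measurable_def Sigma0_succ_def using Pi0_Well_order by blast

lemma Sigma0_succ_measurable_piecewise_constant:
  fixes g :: "'a::topological_space \<Rightarrow> 'b::topological_space"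
  assumes Q: "Pi0_seq_partition t Q" and g: "\<And>j x. x \<in> Q j \<Longrightarrow> g x = c j"
  shows "Sigma0_succ_measurable t g"
  unfolding Sigma0_succ_measurable_def
proof (intro allI impI)
  fix U :: "'b set"
  have Pi0: "\<And>j. Pi0 t (Q j)" and cover: "\<And>x. \<exists>j. x \<in> Q j"
    using Q unfolding Pi0_seq_partition_def by auto
  have w: "Well_order t" "Field t \<noteq> {}" using Pi0_Well_order[OF Pi0] by auto
  define F where "F j = (if c j \<in> U then Q j else {})" for j
  have vimage_eq: "g -` U = (\<Union>j. F j)"
  proof (intro set_eqI iffI)
    fix x assume "x \<in> g -` U"
    moreover obtain j where "x \<in> Q j" using cover by blast
    ultimately show "x \<in> (\<Union>j. F j)" using g unfolding F_def by (intro UN_I[of j]) auto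
  qed (use g in \<open>auto simp: F_def split: if_splits\<close>)
  have "Pi0 t (F j)" for j
    by (simp add: F_def Pi0 Pi0_closed[OF w])
  with vimage_eq show "Sigma0_succ t (g -` U)" unfolding Sigma0_succ_def by blast
qed

lemma locally_continuous_Sigma0_succ_measurable:
  fixes h :: "'a::metric_space \<Rightarrow> 'b::topological_space"
  assumes C: "Pi0_partition r C N" and h: "locally_on_partition continuous_fun C N h"
  shows "Sigma0_succ_measurable r h"
  unfolding Sigma0_succ_measurable_def
proof (intro allI impI)
  fix U :: "'b set" assume U: "open U"
  obtain G where G: "\<And>n. enat n < N \<Longrightarrow> continuous_on UNIV (G n) \<and> (\<forall>x\<in>C n. h x = G n x)"
    using h unfolding locally_on_partition_def continuous_fun_def by blast
  have C_Pi0: "\<And>n. enat n < N \<Longrightarrow> Pi0 r (C n)" and cover: "\<And>x. \<exists>n. enat n < N \<and> x \<in> C n"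
    using C unfolding Pi0_partition_def by blast+
  have "enat 0 < N" using C unfolding Pi0_partition_def by (simp add: one_enat_def Suc_ile_eq)
  then have w: "Well_order r" "Field r \<noteq> {}" using Pi0_Well_order[OF C_Pi0] by auto
  define H where "H n = (if enat n < N then G n -` U \<inter> C n else {})" for n
  have "h -` U = (\<Union>n. H n)"
  proof (intro set_eqI iffI)
    fix x assume "x \<in> h -` U"
    moreover obtain n where "enat n < N" "x \<in> C n" using cover by blast
    ultimately show "x \<in> (\<Union>n. H n)" using G unfolding H_def by (intro UN_I[of n]) auto
  qed (use G in \<open>auto simp: H_def split: if_splits\<close>)
  moreover have "Sigma0_succ r (H n)" for n
  proof (cases "enat n < N")
    case True
    then have "open (G n -` U)" using G U continuous_on_open_vimage[of UNIV "G n"] by auto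
    then show ?thesis
      using True by (simp add: H_def Sigma0_succ_Int_Pi0 open_Sigma0_succ[OF w] C_Pi0)
  qed (simp add: H_def Sigma0_succ_Pi0 Pi0_closed[OF w])
  ultimately show "Sigma0_succ r (h -` U)" by (simp add: Sigma0_succ_UN)
qed

lemma open_mem_iff_infdist_Compl_pos:
  fixes U :: "'a::metric_space set"
  assumes "open U" "U \<noteq> UNIV"
  shows "y \<in> U \<longleftrightarrow> 0 < infdist y (- U)"
proof
  assume "y \<in> U"
  then show "0 < infdist y (- U)" using assms by (intro infdist_pos_not_in_closed) auto
next
  assume "0 < infdist y (- U)"
  then show "y \<in> U" by (metis ComplI infdist_zero less_irrefl)
qed

lemma open_infdist_Compl_margin:
  fixes U :: "'a::metric_space set"
  assumes "open U" "U \<noteq> UNIV" "y \<in> U"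
  obtains k where "2 * inverse (real (Suc k)) < infdist y (- U)"
proof -
  have "0 < infdist y (- U) / 2"
    using open_mem_iff_infdist_Compl_pos[OF assms(1,2)] assms(3) by simp
  then obtain k where "inverse (real (Suc k)) < infdist y (- U) / 2"
    using reals_Archimedean by blast
  then show thesis by (intro that[of k]) simp
qed

lemma vimage_open_eq_uniform_approx:
  fixes f :: "'a \<Rightarrow> 'b::metric_space" and h :: "nat \<Rightarrow> 'a \<Rightarrow> 'b"
  assumes U: "open U" "U \<noteq> UNIV" and h: "\<And>k x. dist (h k x) (f x) < inverse (real (Suc k))"
  shows "f -` U = (\<Union>k. h k -` {y. inverse (real (Suc k)) < infdist y (- U)})"
proof (intro set_eqI iffI)
  fix x assume "x \<in> f -` U"
  then obtain k where "2 * inverse (real (Suc k)) < infdist (f x) (- U)"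
    using open_infdist_Compl_margin[OF U] by blast
  moreover have "infdist (f x) (- U) \<le> infdist (h k x) (- U) + dist (h k x) (f x)"
    using infdist_triangle by (simp add: dist_commute)
  ultimately have "inverse (real (Suc k)) < infdist (h k x) (- U)" using h[of k x] by linarith
  then show "x \<in> (\<Union>k. h k -` {y. inverse (real (Suc k)) < infdist y (- U)})" by blast
next
  fix x assume "x \<in> (\<Union>k. h k -` {y. inverse (real (Suc k)) < infdist y (- U)})"
  then obtain k where "inverse (real (Suc k)) < infdist (h k x) (- U)" by blast
  moreover have "infdist (h k x) (- U) \<le> infdist (f x) (- U) + dist (h k x) (f x)"
    by (rule infdist_triangle)
  ultimately have "0 < infdist (f x) (- U)" using h[of k x] by simp
  then show "x \<in> f -` U" using open_mem_iff_infdist_Compl_pos[OF U] by simp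
qed

lemma uniform_limit_Sigma0_succ_measurable:
  fixes f :: "'a::topological_space \<Rightarrow> 'b::metric_space"
  assumes h: "\<And>n. Sigma0_succ_measurable r (h n)" and lim: "uniform_limit UNIV h f sequentially"
  shows "Sigma0_succ_measurable r f"
  unfolding Sigma0_succ_measurable_def
proof (intro allI impI)
  fix U :: "'b set" assume U: "open U"
  have w: "Well_order r" "Field r \<noteq> {}" using Sigma0_succ_measurable_Well_order[OF h] by auto
  have "\<exists>n. \<forall>x. dist (h n x) (f x) < inverse (real (Suc k))" for k
    using uniform_limitD[OF lim, of "inverse (real (Suc k))"]
    unfolding eventually_sequentially by auto
  then obtain n where n: "\<And>k x. dist (h (n k) x) (f x) < inverse (real (Suc k))" by metis
  have "open {y. inverse (real (Suc k)) < infdist y (- U)}" for k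
    by (intro open_Collect_less continuous_intros)
  then have "Sigma0_succ r (h (n k) -` {y. inverse (real (Suc k)) < infdist y (- U)})" for k
    using h unfolding Sigma0_succ_measurable_def by blast
  moreover have "Sigma0_succ r UNIV" using Sigma0_succ_Pi0[OF Pi0_closed[OF w closed_UNIV]] .
  ultimately show "Sigma0_succ r (f -` U)"
  proof (cases "U = UNIV")
    case False
    show ?thesis
      unfolding vimage_open_eq_uniform_approx[where h = "\<lambda>k. h (n k)", OF U False n]
      by (rule Sigma0_succ_UN) fact
  qed simp
qed

lemma Pi0_vimage_closed_if_measurable_below:
  fixes g :: "'a::metric_space \<Rightarrow> 'b::topological_space"
  assumes g: "Sigma0_succ_measurable s g" and "s <o r" and "closed F"
  shows "Pi0 r (g -` F)"
proof -
  have "Sigma0_succ s (g -` (- F))"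
    using g \<open>closed F\<close> unfolding Sigma0_succ_measurable_def by (simp add: open_Compl)
  then obtain E :: "nat \<Rightarrow> 'a set" where E: "g -` (- F) = (\<Union>j. E j)" "\<And>j. Pi0 s (E j)"
    unfolding Sigma0_succ_def by blast
  have "Sigma0 r (\<Union>j. E j)"
    using E(2) \<open>s <o r\<close> Pi0_Well_order[OF E(2)] ordLess_Well_order
    by (intro Sigma0_UN_Pi0_below[where S = "\<lambda>_. s"]) auto
  then show ?thesis unfolding Pi0_def using E(1) by (simp add: vimage_Compl)
qed

lemma vimage_open_eq_pointwise_limit:
  fixes f :: "'a \<Rightarrow> 'b::metric_space"
  assumes U: "open U" "U \<noteq> UNIV" and lim: "\<And>x. (\<lambda>n. g n x) \<longlonglongrightarrow> f x"
  shows "f -` U = (\<Union>k m. \<Inter>n. g (n + m) -` {y. inverse (real (Suc k)) \<le> infdist y (- U)})"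
    (is "_ = (\<Union>k m. \<Inter>n. g (n + m) -` ?F k)")
proof (intro set_eqI iffI)
  fix x assume "x \<in> f -` U"
  then obtain k where k: "2 * inverse (real (Suc k)) < infdist (f x) (- U)"
    using open_infdist_Compl_margin[OF U] by blast
  obtain m where m: "\<And>n. m \<le> n \<Longrightarrow> dist (g n x) (f x) < inverse (real (Suc k))"
    using lim[of x] unfolding tendsto_iff eventually_sequentially by (meson inverse_Suc)
  have "g (n + m) x \<in> ?F k" for n
  proof -
    have "infdist (f x) (- U) \<le> infdist (g (n + m) x) (- U) + dist (g (n + m) x) (f x)"
      using infdist_triangle by (simp add: dist_commute)
    then show ?thesis using k m[of "n + m"] by simp
  qed
  then show "x \<in> (\<Union>k m. \<Inter>n. g (n + m) -` ?F k)" by blast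
next
  fix x assume "x \<in> (\<Union>k m. \<Inter>n. g (n + m) -` ?F k)"
  then obtain k m where km: "\<And>n. g (n + m) x \<in> ?F k" by blast
  have "closed (?F k)" by (intro closed_Collect_le continuous_intros)
  moreover have "\<forall>\<^sub>F n in sequentially. g (n + m) x \<in> ?F k" using km by simp
  moreover have "(\<lambda>n. g (n + m) x) \<longlonglongrightarrow> f x" using lim LIMSEQ_ignore_initial_segment by blast
  ultimately have "f x \<in> ?F k" by (rule Lim_in_closed_set[OF _ _ trivial_limit_sequentially])
  then have "inverse (real (Suc k)) \<le> infdist (f x) (- U)" by simp
  then have "0 < infdist (f x) (- U)" by (rule less_le_trans[rotated]) simp
  then show "x \<in> f -` U" using open_mem_iff_infdist_Compl_pos[OF U] by simp
qed

lemma pointwise_limit_Sigma0_succ_measurable: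
  fixes f :: "'a::metric_space \<Rightarrow> 'b::metric_space"
  assumes S: "\<And>n. S n <o r" and g: "\<And>n. Sigma0_succ_measurable (S n) (g n)"
    and lim: "\<And>x. (\<lambda>n. g n x) \<longlonglongrightarrow> f x"
  shows "Sigma0_succ_measurable r f"
  unfolding Sigma0_succ_measurable_def
proof (intro allI impI)
  fix U :: "'b set" assume U: "open U"
  have w: "Well_order r" "Field r \<noteq> {}"
    using S[of 0] Sigma0_succ_measurable_Well_order[OF g] ordLess_Well_order ordLess_Field_nonempty
    by blast+
  have F_closed: "closed {y. inverse (real (Suc k)) \<le> infdist y (- U)}" for k
    by (intro closed_Collect_le continuous_intros)
  have "Pi0 r (\<Inter>n. g (n + m) -` {y. inverse (real (Suc k)) \<le> infdist y (- U)})" for k m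
    by (intro Pi0_INT w Pi0_vimage_closed_if_measurable_below[OF g S] F_closed)
  moreover have "Sigma0_succ r UNIV" using Sigma0_succ_Pi0[OF Pi0_closed[OF w closed_UNIV]] .
  ultimately show "Sigma0_succ r (f -` U)"
  proof (cases "U = UNIV")
    case False
    show ?thesis
      unfolding vimage_open_eq_pointwise_limit[OF U False lim]
      by (intro Sigma0_succ_UN Sigma0_succ_Pi0) fact
  qed simp
qed

lemma baire_class_Sigma0_succ_measurable:
  fixes f :: "'a::metric_space \<Rightarrow> 'b::metric_space"
  assumes "baire_class r f"
  shows "Sigma0_succ_measurable r f"
  using assms
proof (induction rule: baire_class.induct)
  case (baire_one r f)
  then have "ord_le_one r" using ord_le_one_iff_card by fastforce
  with baire_one show ?case
    unfolding Sigma0_succ_measurable_def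
    using Sigma0_succ_ord_le_one_iff_fsigma Sigma0_card_two_iff_fsigma by fastforce
next
  case (baire_lim r g f)
  then obtain S :: "nat \<Rightarrow> nat rel" where "\<And>n. S n <o r" "\<And>n. Sigma0_succ_measurable (S n) (g n)"
    by metis
  moreover have "\<And>x. (\<lambda>n. g n x) \<longlonglongrightarrow> f x" using baire_lim by blast
  ultimately show ?case by (rule pointwise_limit_Sigma0_succ_measurable)
qed

section \<open>Approximation by locally constant functions\<close>

lemma separable_dense_sequence:
  assumes "separable_space TYPE('a)"
  obtains d :: "nat \<Rightarrow> 'a::metric_space" where "\<And>y \<epsilon>. 0 < \<epsilon> \<Longrightarrow> \<exists>k. dist y (d k) < \<epsilon>"
proof -
  obtain D :: "'a set" where D: "countable D" "closure D = UNIV"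
    using assms unfolding separable_space_def by blast
  then have "D \<noteq> {}" by auto
  have "\<exists>k. dist y (from_nat_into D k) < \<epsilon>" if \<epsilon>: "0 < \<epsilon>" for y \<epsilon>
  proof -
    obtain z where "z \<in> D" "dist z y < \<epsilon>" using closure_approachable[of y D] D(2) \<epsilon> by blast
    then show ?thesis
      using range_from_nat_into[OF \<open>D \<noteq> {}\<close> D(1)] by (metis dist_commute rangeE)
  qed
  then show thesis by (rule that)
qed

lemma Sigma0_succ_measurable_partition_approx:
  fixes f :: "'a::metric_space \<Rightarrow> 'b::metric_space"
  assumes sep: "separable_space TYPE('a)" and zd: "zero_dimensional TYPE('a)"
    and sepb: "separable_space TYPE('b)" and f: "Sigma0_succ_measurable r f" and "\<epsilon> > 0"
  obtains Q :: "nat \<Rightarrow> 'a set" and c :: "nat \<Rightarrow> 'b"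
  where "Pi0_seq_partition r Q" "\<And>j x. x \<in> Q j \<Longrightarrow> dist (f x) (c j) < \<epsilon>"
proof -
  obtain d :: "nat \<Rightarrow> 'b" where d: "\<And>y \<epsilon>. 0 < \<epsilon> \<Longrightarrow> \<exists>k. dist y (d k) < \<epsilon>"
    using separable_dense_sequence[OF sepb] by blast
  have "Sigma0_succ r (f -` ball (d k) \<epsilon>)" for k
    using f unfolding Sigma0_succ_measurable_def by simp
  then obtain E :: "nat \<Rightarrow> nat \<Rightarrow> 'a set"
    where E: "\<And>k. f -` ball (d k) \<epsilon> = (\<Union>j. E k j)" "\<And>k j. Pi0 r (E k j)"
    unfolding Sigma0_succ_def by metis
  have "x \<in> (\<Union>p. case_prod E p)" for x
  proof -
    obtain k where "dist (f x) (d k) < \<epsilon>" using d \<open>\<epsilon> > 0\<close> by blast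
    then have "x \<in> f -` ball (d k) \<epsilon>" by (simp add: dist_commute)
    then have "x \<in> (\<Union>j. E k j)" using E(1)[of k] by simp
    then show ?thesis by auto
  qed
  then have cover: "(\<Union>p. case_prod E p) = UNIV" by blast
  have "Pi0 r (case_prod E p)" for p using E(2) by (cases p) simp
  then have "\<exists>Q. Pi0_seq_partition r Q \<and> (\<forall>n. \<exists>p. Q n \<subseteq> case_prod E p)"
    by (rule Pi0_cover_refinement[OF sep zd _ cover])
  then obtain Q :: "nat \<Rightarrow> 'a set"
    where Q: "Pi0_seq_partition r Q" "\<And>n. \<exists>p. Q n \<subseteq> case_prod E p"
    by auto
  have "\<exists>c. \<forall>x\<in>Q n. dist (f x) c < \<epsilon>" for n
  proof -
    obtain k j where "Q n \<subseteq> E k j" using Q(2)[of n] by auto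
    then have "\<forall>x\<in>Q n. dist (f x) (d k) < \<epsilon>" using E(1)[of k] by (force simp: dist_commute)
    then show ?thesis by blast
  qed
  then obtain c where "\<And>n x. x \<in> Q n \<Longrightarrow> dist (f x) (c n) < \<epsilon>" by metis
  with Q(1) show thesis by (rule that)
qed

lemma locally_constant_approx_of_partition:
  assumes Q: "Pi0_seq_partition r Q" and c: "\<And>j x. x \<in> Q j \<Longrightarrow> dist (f x) (c j) < \<epsilon>"
  shows "\<exists>h. (\<forall>x. dist (h x) (f x) < \<epsilon>) \<and>
    (\<exists>C N. Pi0_partition r C N \<and> locally_on_partition constant_fun C N h)"
proof -
  have disj: "disjoint_family Q" and cover: "\<And>x. \<exists>j. x \<in> Q j"
    using Q unfolding Pi0_seq_partition_def by auto
  define h where "h x = c (SOME j. x \<in> Q j)" for x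
  have h: "h x = c j" if "x \<in> Q j" for j x
  proof -
    have "x \<in> Q (SOME j. x \<in> Q j)" using that by (rule someI)
    then have "(SOME j. x \<in> Q j) = j" using that disj unfolding disjoint_family_on_def by blast
    then show ?thesis unfolding h_def by simp
  qed
  have "dist (h x) (f x) < \<epsilon>" for x
    using cover[of x] h c by (metis dist_commute)
  moreover have "\<exists>C N. Pi0_partition r C N \<and> locally_on_partition constant_fun C N h"
    using h by (intro Pi0_partition_of_seq_partition[OF Q, where G = "\<lambda>j _. c j"])
      (auto simp: constant_fun_def)
  ultimately show ?thesis by blast
qed

lemma Sigma0_succ_measurable_approx_by_local_constant:
  fixes f :: "'a::metric_space \<Rightarrow> 'b::metric_space"
  assumes sep: "separable_space TYPE('a)" and zd: "zero_dimensional TYPE('a)"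
    and sepb: "separable_space TYPE('b)" and f: "Sigma0_succ_measurable r f"
  shows "approx_by_local r constant_fun f"
proof -
  have "\<exists>h. (\<forall>x. dist (h x) (f x) < inverse (real (Suc n))) \<and>
      (\<exists>C N. Pi0_partition r C N \<and> locally_on_partition constant_fun C N h)" for n
    using Sigma0_succ_measurable_partition_approx[OF sep zd sepb f, of "inverse (real (Suc n))"]
      locally_constant_approx_of_partition
    by (metis inverse_positive_iff_positive of_nat_0_less_iff zero_less_Suc)
  then obtain H :: "nat \<Rightarrow> 'a \<Rightarrow> 'b" where
    H: "\<And>n x. dist (H n x) (f x) < inverse (real (Suc n))"
    "\<And>n. \<exists>C N. Pi0_partition r C N \<and> locally_on_partition constant_fun C N (H n)"
    by metis
  have "uniform_limit UNIV H f sequentially"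
  proof (rule uniform_limitI)
    fix e :: real assume "e > 0"
    then obtain n0 where n0: "inverse (real (Suc n0)) < e" using reals_Archimedean by blast
    have "dist (H n x) (f x) < e" if "n0 \<le> n" for n x
    proof -
      have "inverse (real (Suc n)) \<le> inverse (real (Suc n0))" using that by (simp add: field_simps)
      then show ?thesis using H(1)[of n x] n0 by linarith
    qed
    then show "\<forall>\<^sub>F n in sequentially. \<forall>x\<in>UNIV. dist (H n x) (f x) < e"
      unfolding eventually_sequentially by blast
  qed
  with H(2) show ?thesis unfolding approx_by_local_def by blast
qed

lemma approx_by_local_mono:
  assumes "approx_by_local r P f" "\<And>g. P g \<Longrightarrow> P' g"
  shows "approx_by_local r P' f"
  using assms unfolding approx_by_local_def locally_on_partition_def by meson

lemma constant_fun_lipschitz: "constant_fun g \<Longrightarrow> lipschitz_fun g"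
  unfolding constant_fun_def lipschitz_fun_def by (auto intro!: exI[of _ 0] lipschitz_onI)

lemma lipschitz_fun_continuous: "lipschitz_fun g \<Longrightarrow> continuous_fun g"
  unfolding lipschitz_fun_def continuous_fun_def using lipschitz_on_continuous_on by blast

lemma approx_by_local_continuous_Sigma0_succ_measurable:
  fixes f :: "'a::metric_space \<Rightarrow> 'b::metric_space"
  assumes "approx_by_local r continuous_fun f"
  shows "Sigma0_succ_measurable r f"
proof -
  obtain h where lim: "uniform_limit UNIV h f sequentially"
    and h: "\<And>n. \<exists>C N. Pi0_partition r C N \<and> locally_on_partition continuous_fun C N (h n)"
    using assms unfolding approx_by_local_def by blast
  have "Sigma0_succ_measurable r (h n)" for n
    using h[of n] locally_continuous_Sigma0_succ_measurable by blast
  then show ?thesis using uniform_limit_Sigma0_succ_measurable lim by blast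
qed

section \<open>Measurable functions as limits of functions of lower class\<close>

text \<open>If no \<open>j \<le> n\<close> qualifies, the value is an unspecified constant; it still depends only on
  the memberships of \<open>x\<close> in the sets \<open>Z j i\<close> with \<open>i, j \<le> n\<close>.\<close>
definition first_index :: "(nat \<Rightarrow> nat \<Rightarrow> 'a set) \<Rightarrow> nat \<Rightarrow> 'a \<Rightarrow> nat" where
  "first_index Z n x = (LEAST j. j \<le> n \<and> (\<forall>i\<le>n. x \<in> Z j i))"

lemma first_index_cong:
  assumes "\<And>j i. j \<le> n \<Longrightarrow> i \<le> n \<Longrightarrow> x \<in> Z j i \<longleftrightarrow> y \<in> Z j i"
  shows "first_index Z n x = first_index Z n y"
proof -
  have "(\<lambda>j. j \<le> n \<and> (\<forall>i\<le>n. x \<in> Z j i)) = (\<lambda>j. j \<le> n \<and> (\<forall>i\<le>n. y \<in> Z j i))"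
    using assms by auto
  then show ?thesis unfolding first_index_def by simp
qed

lemma eventually_first_index:
  assumes "x \<in> (\<Inter>i. Z j0 i)" and "\<And>j. j < j0 \<Longrightarrow> x \<notin> (\<Inter>i. Z j i)"
  shows "\<forall>\<^sub>F n in sequentially. first_index Z n x = j0"
proof -
  have "\<forall>\<^sub>F n in sequentially. \<exists>i\<le>n. x \<notin> Z j i" if j: "j < j0" for j
  proof -
    obtain i where "x \<notin> Z j i" using assms(2)[OF j] by blast
    then show ?thesis unfolding eventually_sequentially by blast
  qed
  then have "\<forall>\<^sub>F n in sequentially. (\<forall>j\<in>{..<j0}. \<exists>i\<le>n. x \<notin> Z j i) \<and> j0 \<le> n"
    by (intro eventually_conj eventually_ball_finite) auto
  then show ?thesis
  proof (rule eventually_mono)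
    fix n assume n: "(\<forall>j\<in>{..<j0}. \<exists>i\<le>n. x \<notin> Z j i) \<and> j0 \<le> n"
    show "first_index Z n x = j0"
      unfolding first_index_def
    proof (rule Least_equality)
      show "j0 \<le> n \<and> (\<forall>i\<le>n. x \<in> Z j0 i)" using n assms(1) by blast
    next
      fix j assume "j \<le> n \<and> (\<forall>i\<le>n. x \<in> Z j i)"
      then show "j0 \<le> j" using n by (meson lessThan_iff not_le)
    qed
  qed
qed

text \<open>Read \<open>s k\<close> as an \<open>e k\<close>-approximation of the same point: the pick is the candidate at the
  highest level \<open>k \<le> n\<close> up to which all candidates are mutually consistent.\<close>
definition consistent_pick :: "(nat \<Rightarrow> real) \<Rightarrow> (nat \<Rightarrow> 'a::metric_space) \<Rightarrow> nat \<Rightarrow> 'a" where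
  "consistent_pick e s n = s (Max {k. k \<le> n \<and> (\<forall>a\<le>k. \<forall>b\<le>k. dist (s a) (s b) \<le> e a + e b)})"

lemma consistent_pick_cong:
  assumes "0 \<le> e 0" and "\<And>k. k \<le> n \<Longrightarrow> s k = s' k"
  shows "consistent_pick e s n = consistent_pick e s' n"
proof -
  have s_eq: "s a = s' a" if "a \<le> k" "k \<le> n" for a k using assms(2) that by simp
  define K where "K = {k. k \<le> n \<and> (\<forall>a\<le>k. \<forall>b\<le>k. dist (s a) (s b) \<le> e a + e b)}"
  have "K = {k. k \<le> n \<and> (\<forall>a\<le>k. \<forall>b\<le>k. dist (s' a) (s' b) \<le> e a + e b)}"
    unfolding K_def by (auto simp: s_eq)
  moreover have "0 \<in> K" "finite K" using assms(1) unfolding K_def by auto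
  then have "Max K \<le> n" using Max_in[of K] unfolding K_def by blast
  ultimately show ?thesis unfolding consistent_pick_def K_def[symmetric] by (simp add: assms(2))
qed

lemma tendsto_consistent_pick:
  fixes y :: "'a::metric_space"
  assumes e: "\<And>k. 0 \<le> e k" "decseq e" "e \<longlonglongrightarrow> 0"
    and d: "\<And>k. dist (d k) y < e k" and s: "\<And>k. \<forall>\<^sub>F n in sequentially. s n k = d k"
  shows "(\<lambda>n. consistent_pick e (s n) n) \<longlonglongrightarrow> y"
  unfolding tendsto_iff
proof (intro allI impI)
  fix \<epsilon> :: real assume "\<epsilon> > 0"
  then have "\<forall>\<^sub>F k in sequentially. e k < \<epsilon> / 3" by (intro order_tendstoD(2)[OF e(3)]) simp
  then obtain m where m: "e m < \<epsilon> / 3" by (auto simp: eventually_sequentially)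
  have "\<forall>\<^sub>F n in sequentially. (\<forall>k\<in>{..m}. s n k = d k) \<and> m \<le> n"
    by (intro eventually_conj eventually_ball_finite) (auto simp: s)
  then show "\<forall>\<^sub>F n in sequentially. dist (consistent_pick e (s n) n) y < \<epsilon>"
  proof (rule eventually_mono)
    fix n assume n: "(\<forall>k\<in>{..m}. s n k = d k) \<and> m \<le> n"
    define K where "K = {k. k \<le> n \<and> (\<forall>a\<le>k. \<forall>b\<le>k. dist (s n a) (s n b) \<le> e a + e b)}"
    have "m \<in> K"
    proof -
      have "dist (d a) (d b) \<le> e a + e b" for a b
        using dist_triangle2[of "d a" "d b" y] d[of a] d[of b] by linarith
      then show ?thesis unfolding K_def using n by auto
    qed
    moreover have "finite K" unfolding K_def by simp
    ultimately have M: "m \<le> Max K" "Max K \<in> K" by (auto intro: Max_ge Max_in)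
    have "consistent_pick e (s n) n = s n (Max K)" unfolding consistent_pick_def K_def ..
    moreover have "dist (s n (Max K)) (s n m) \<le> e (Max K) + e m"
      using M unfolding K_def by blast
    ultimately have "dist (consistent_pick e (s n) n) (s n m) \<le> e (Max K) + e m" by simp
    also have "\<dots> \<le> 2 * e m" using decseqD[OF e(2) M(1)] by simp
    finally have "dist (consistent_pick e (s n) n) (d m) \<le> 2 * e m" using n by simp
    then show "dist (consistent_pick e (s n) n) y < \<epsilon>"
      using dist_triangle[of "consistent_pick e (s n) n" y "d m"] d[of m] m by linarith
  qed
qed

lemma Pi0_eq_INT_Sigma0_below:
  fixes A :: "'a::metric_space set"
  assumes "Pi0 r A" "\<not> ord_le_one r"
  obtains Z :: "nat \<Rightarrow> 'a set" and S :: "nat \<Rightarrow> nat rel"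
  where "A = (\<Inter>i. Z i)" "\<And>i. S i <o r" "\<And>i. Field (S i) \<noteq> {}" "\<And>i. Sigma0 (S i) (Z i)"
proof -
  obtain F :: "nat \<Rightarrow> 'a set" and S :: "nat \<Rightarrow> nat rel"
    where F: "- A = (\<Union>i. F i)" and S: "\<And>i. S i <o r" "\<And>i. Field (S i) \<noteq> {}" "\<And>i. Pi0 (S i) (F i)"
    using Sigma0_UN_Pi0_belowE[OF assms(1)[unfolded Pi0_def] assms(2)] by metis
  have "A = - (\<Union>i. F i)" using F by (metis double_compl)
  then have "A = (\<Inter>i. - F i)" by simp
  with S show thesis by (intro that[of "\<lambda>i. - F i" S]) (simp_all add: Pi0_def)
qed

lemma Pi0_family_eq_INT_Sigma0_below:
  fixes A :: "'q \<Rightarrow> 'a::metric_space set"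
  assumes "\<And>q. Pi0 r (A q)" "\<not> ord_le_one r"
  obtains Z :: "'q \<Rightarrow> nat \<Rightarrow> 'a set" and S :: "'q \<Rightarrow> nat \<Rightarrow> nat rel"
  where "\<And>q. A q = (\<Inter>i. Z q i)" "\<And>q i. S q i <o r \<and> Field (S q i) \<noteq> {} \<and> Sigma0 (S q i) (Z q i)"
proof -
  have "\<exists>(Z :: nat \<Rightarrow> 'a set) (S :: nat \<Rightarrow> nat rel). A q = (\<Inter>i. Z i) \<and>
      (\<forall>i. S i <o r \<and> Field (S i) \<noteq> {} \<and> Sigma0 (S i) (Z i))" for q
    using Pi0_eq_INT_Sigma0_below[OF assms(1)[of q] assms(2)] by metis
  then obtain Z where "\<forall>q. \<exists>S :: nat \<Rightarrow> nat rel. A q = (\<Inter>i. Z q i) \<and>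
      (\<forall>i. S i <o r \<and> Field (S i) \<noteq> {} \<and> Sigma0 (S i) (Z q i))"
    by metis
  then obtain S where "\<forall>q. A q = (\<Inter>i. Z q i) \<and>
      (\<forall>i. S q i <o r \<and> Field (S q i) \<noteq> {} \<and> Sigma0 (S q i) (Z q i))"
    by metis
  then show thesis by (intro that[of Z S]) auto
qed

lemma finitely_determined_measurable_below:
  fixes g :: "'a::metric_space \<Rightarrow> 'b::topological_space" and Z :: "'i \<Rightarrow> 'a set"
  assumes sep: "separable_space TYPE('a)" and zd: "zero_dimensional TYPE('a)"
    and I: "finite I" "I \<noteq> {}"
    and S: "\<And>i. i \<in> I \<Longrightarrow> S i <o r \<and> Field (S i) \<noteq> {} \<and> Sigma0 (S i) (Z i)"
    and g: "\<And>x y. (\<forall>i\<in>I. x \<in> Z i \<longleftrightarrow> y \<in> Z i) \<Longrightarrow> g x = g y"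
  shows "\<exists>t. t <o r \<and> Field t \<noteq> {} \<and> Sigma0_succ_measurable t g"
proof -
  obtain t :: "nat rel" where t: "t <o r" "Field t \<noteq> {}" "\<forall>i\<in>I. S i \<le>o t"
    using ordLess_finite_upper_bound[OF I] S by blast
  then have "\<forall>i\<in>I. Sigma0 t (Z i)" using S Sigma0_mono by blast
  then obtain Q where Q: "Pi0_seq_partition t Q" "\<forall>l. \<forall>i\<in>I. Q l \<subseteq> Z i \<or> Q l \<inter> Z i = {}"
    using Sigma0_finite_refinement[OF sep zd I(1) conjunct1[OF ordLess_Well_order[OF t(1)]] t(2)]
    by blast
  have "g x = g (SOME y. y \<in> Q l)" if "x \<in> Q l" for l x
  proof (rule g)
    have "(SOME y. y \<in> Q l) \<in> Q l" using that by (rule someI)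
    then show "\<forall>i\<in>I. x \<in> Z i \<longleftrightarrow> (SOME y. y \<in> Q l) \<in> Z i" using that Q(2) by blast
  qed
  then have "Sigma0_succ_measurable t g"
    by (rule Sigma0_succ_measurable_piecewise_constant[OF Q(1)])
  with t show ?thesis by blast
qed

lemma decseq_inverse_Suc: "decseq (\<lambda>k. inverse (real (Suc k)))"
  unfolding decseq_def by (simp add: le_imp_inverse_le)

lemma tendsto_consistent_pick_partitions:
  fixes f :: "'a \<Rightarrow> 'b::metric_space"
  assumes P: "\<And>k. disjoint_family (P k)" "\<And>k. (\<Union>j. P k j) = UNIV"
    and Z: "\<And>k j. P k j = (\<Inter>i. Z k j i)"
    and c: "\<And>k j x. x \<in> P k j \<Longrightarrow> dist (f x) (c k j) < inverse (real (Suc k))"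
  shows "(\<lambda>n. consistent_pick (\<lambda>k. inverse (real (Suc k))) (\<lambda>k. c k (first_index (Z k) n x)) n)
    \<longlonglongrightarrow> f x"
proof -
  have "\<exists>j. x \<in> P k j" for k using P(2)[of k] by blast
  then obtain J where J: "\<And>k. x \<in> P k (J k)" by metis
  have "x \<notin> P k j" if "j \<noteq> J k" for k j
    using J[of k] P(1)[of k] that unfolding disjoint_family_on_def by blast
  then have index: "\<forall>\<^sub>F n in sequentially. first_index (Z k) n x = J k" for k
    using J[of k] unfolding Z by (intro eventually_first_index) auto
  have "\<forall>\<^sub>F n in sequentially. c k (first_index (Z k) n x) = c k (J k)" for k
    using index[of k] by (rule eventually_mono) simp
  moreover have "dist (c k (J k)) (f x) < inverse (real (Suc k))" for k
    using c[OF J] by (simp add: dist_commute)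
  ultimately show ?thesis
    using LIMSEQ_inverse_real_of_nat decseq_inverse_Suc
    by (intro tendsto_consistent_pick) (auto intro: less_imp_le)
qed

lemma Sigma0_succ_measurable_limit_of_lower:
  fixes f :: "'a::metric_space \<Rightarrow> 'b::metric_space"
  assumes sep: "separable_space TYPE('a)" and zd: "zero_dimensional TYPE('a)"
    and sepb: "separable_space TYPE('b)" and f: "Sigma0_succ_measurable r f"
    and r: "\<not> ord_le_one r"
  obtains S :: "nat \<Rightarrow> nat rel" and g :: "nat \<Rightarrow> 'a \<Rightarrow> 'b"
  where "\<And>n. S n <o r" "\<And>n. Sigma0_succ_measurable (S n) (g n)" "\<And>x. (\<lambda>n. g n x) \<longlonglongrightarrow> f x"
proof -
  define e :: "nat \<Rightarrow> real" where "e k = inverse (real (Suc k))" for k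
  have e_pos: "0 < e k" for k unfolding e_def by simp
  have "\<exists>(Q :: nat \<Rightarrow> 'a set) (c :: nat \<Rightarrow> 'b).
      Pi0_seq_partition r Q \<and> (\<forall>j. \<forall>x\<in>Q j. dist (f x) (c j) < e k)" for k
    using Sigma0_succ_measurable_partition_approx[OF sep zd sepb f e_pos[of k]] by metis
  then obtain P :: "nat \<Rightarrow> nat \<Rightarrow> 'a set" and c :: "nat \<Rightarrow> nat \<Rightarrow> 'b"
    where P: "\<And>k. Pi0_seq_partition r (P k)"
      and c: "\<And>k j x. x \<in> P k j \<Longrightarrow> dist (f x) (c k j) < e k"
    by metis
  have "Pi0 r (case_prod P q)" for q using P unfolding Pi0_seq_partition_def by (cases q) simp
  then obtain Z :: "nat \<times> nat \<Rightarrow> nat \<Rightarrow> 'a set" and T :: "nat \<times> nat \<Rightarrow> nat \<Rightarrow> nat rel"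
    where Z: "\<And>q. case_prod P q = (\<Inter>i. Z q i)"
      and T: "\<And>q i. T q i <o r \<and> Field (T q i) \<noteq> {} \<and> Sigma0 (T q i) (Z q i)"
    using Pi0_family_eq_INT_Sigma0_below[OF _ r] by metis
  define g where "g n x = consistent_pick e (\<lambda>k. c k (first_index (\<lambda>j. Z (k, j)) n x)) n" for n x
  have "disjoint_family (P k)" "(\<Union>j. P k j) = UNIV" for k
    using P unfolding Pi0_seq_partition_def by auto
  moreover have "P k j = (\<Inter>i. Z (k, j) i)" for k j using Z[of "(k, j)"] by simp
  ultimately have "(\<lambda>n. g n x) \<longlonglongrightarrow> f x" for x
    unfolding g_def e_def by (rule tendsto_consistent_pick_partitions) (use c in \<open>simp add: e_def\<close>)
  moreover have "\<exists>t. t <o r \<and> Field t \<noteq> {} \<and> Sigma0_succ_measurable t (g n)" for n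
  proof (rule finitely_determined_measurable_below[OF sep zd, where I = "{..n} \<times> {..n} \<times> {..n}"
        and S = "\<lambda>(k, j, i). T (k, j) i" and Z = "\<lambda>(k, j, i). Z (k, j) i"])
    fix x y
    assume "\<forall>p\<in>{..n} \<times> {..n} \<times> {..n}. x \<in> (case p of (k, j, i) \<Rightarrow> Z (k, j) i) \<longleftrightarrow>
      y \<in> (case p of (k, j, i) \<Rightarrow> Z (k, j) i)"
    then have "first_index (\<lambda>j. Z (k, j)) n x = first_index (\<lambda>j. Z (k, j)) n y" if "k \<le> n" for k
      using that by (intro first_index_cong) auto
    then show "g n x = g n y"
      unfolding g_def using e_pos[of 0] by (intro consistent_pick_cong) auto
  qed (use T in auto)
  then obtain S :: "nat \<Rightarrow> nat rel"
    where "\<And>n. S n <o r" "\<And>n. Sigma0_succ_measurable (S n) (g n)" by metis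
  ultimately show thesis using that by blast
qed

lemma Sigma0_succ_measurable_baire_class:
  fixes f :: "'a::metric_space \<Rightarrow> 'b::metric_space"
  assumes sep: "separable_space TYPE('a)" and zd: "zero_dimensional TYPE('a)"
    and sepb: "separable_space TYPE('b)" and "Sigma0_succ_measurable r f"
  shows "baire_class r f"
  using assms(4)
proof (induction r arbitrary: f rule: wf_induct_rule[OF wf_ordLess])
  case (1 r f)
  have w: "Well_order r" "Field r \<noteq> {}" using Sigma0_succ_measurable_Well_order[OF 1(2)] by auto
  show ?case
  proof (cases "ord_le_one r")
    case True
    have two: "Well_order (natLeq_on 2)" "finite (Field (natLeq_on 2))"
      "card (Field (natLeq_on 2)) = 2"
      using natLeq_on_Well_order[of 2] by (simp_all add: Field_natLeq_on)
    have "Sigma0 (natLeq_on 2) (f -` U)" if "open U" for U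
      using 1(2) that Sigma0_succ_ord_le_one_iff_fsigma[OF w True]
        Sigma0_card_two_iff_fsigma[OF two]
      unfolding Sigma0_succ_measurable_def by blast
    moreover have "finite (Field r) \<and> card (Field r) = 1"
      using ord_le_one_iff_card[OF w] True by blast
    ultimately show ?thesis using two by (intro baire_one w(1)) blast+
  next
    case False
    obtain S g where S: "\<And>n. S n <o r" and g: "\<And>n. Sigma0_succ_measurable (S n) (g n)"
      and lim: "\<And>x. (\<lambda>n. g n x) \<longlonglongrightarrow> f x"
      using Sigma0_succ_measurable_limit_of_lower[OF sep zd sepb 1(2) False] by metis
    have "S n <o r \<and> Field (S n) \<noteq> {} \<and> baire_class (S n) (g n)" for n
      using S g 1(1) Sigma0_succ_measurable_Well_order by blast
    then show ?thesis using lim by (intro baire_lim[OF w(1), where g = g]) blast+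
  qed
qed

theorem mainTheorem13:
  fixes f :: "'a::metric_space \<Rightarrow> 'b::metric_space"
    and r :: "nat rel"
  assumes "separable_space TYPE('a)" and "separable_space TYPE('b)"
    and "zero_dimensional TYPE('a)"
    and "Well_order r" and "Field r \<noteq> {}"
  shows "(baire_class r f \<longleftrightarrow> approx_by_local r constant_fun f)
       \<and> (baire_class r f \<longleftrightarrow> approx_by_local r lipschitz_fun f)
       \<and> (baire_class r f \<longleftrightarrow> approx_by_local r continuous_fun f)"
proof -
  have "baire_class r f \<longleftrightarrow> Sigma0_succ_measurable r f"
    using baire_class_Sigma0_succ_measurable Sigma0_succ_measurable_baire_class[OF assms(1,3,2)]
    by blast
  moreover have "Sigma0_succ_measurable r f \<Longrightarrow> approx_by_local r constant_fun f"
    by (rule Sigma0_succ_measurable_approx_by_local_constant[OF assms(1,3,2)])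
  moreover have "approx_by_local r constant_fun f \<Longrightarrow> approx_by_local r lipschitz_fun f"
    using approx_by_local_mono constant_fun_lipschitz by blast
  moreover have "approx_by_local r lipschitz_fun f \<Longrightarrow> approx_by_local r continuous_fun f"
    using approx_by_local_mono lipschitz_fun_continuous by blast
  moreover have "approx_by_local r continuous_fun f \<Longrightarrow> Sigma0_succ_measurable r f"
    by (rule approx_by_local_continuous_Sigma0_succ_measurable)
  ultimately show ?thesis by blast
qed

end
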